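(* For any $m \in \mathbb{N}$ and any $\vec x = (x_m,\dots,x_1) \in \mathbb{Z}_2^m$, let $I(\vec x) = \sum_{i=1}^m x_i 2^{i-1}$ denote its corresponding integer. Let $V \subseteq \mathbb{Z}_2^n$ be a vector subspace of dimension $k$, linearly ordered via $I$ (i.e. $\vec v < \vec v'$ iff $I(\vec v) < I(\vec v')$), and enumerate its elements in increasing order as $V = \{\vec v_0, \vec v_1, \dots, \vec v_{2^k-1}\}$. Then the map $T: \mathbb{Z}_2^k \to V$ given by $T(\vec x) = \vec v_{I(\vec x)}$ is a linear isomorphism (of $\mathbb{Z}_2$-vector spaces).
   Context: Vectors in $\mathbb{Z}_2^m$ are written with their first-listed coordinate as the most significant bit, so $I$ is the usual binary-to-integer map. *)

theory Defs
  imports Main HOL.Vector_Spaces "HOL-Library.Z2" "HOL-Library.Function_Algebras"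
begin

text \<open>Vectors of Z_2^m are modelled as functions nat => bit whose support lies in
  the coordinate range 1..m; coordinate i carries weight 2^(i-1).
  The ambient Z_2-vector space is (nat => bit) with pointwise operations.\<close>

definition zscale :: "bit \<Rightarrow> (nat \<Rightarrow> bit) \<Rightarrow> (nat \<Rightarrow> bit)" where
  "zscale c x = (\<lambda>i. c * x i)"

definition vecs :: "nat \<Rightarrow> (nat \<Rightarrow> bit) set" where
  "vecs m = {x. \<forall>i. x i \<noteq> 0 \<longrightarrow> 1 \<le> i \<and> i \<le> m}"

definition Ival :: "nat \<Rightarrow> (nat \<Rightarrow> bit) \<Rightarrow> nat" where
  "Ival m x = (\<Sum>i=1..m. of_bit (x i) * 2 ^ (i - 1))"

definition is_subspace :: "nat \<Rightarrow> (nat \<Rightarrow> bit) set \<Rightarrow> bool" where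
  "is_subspace n V \<longleftrightarrow> V \<subseteq> vecs n \<and> 0 \<in> V \<and>
     (\<forall>x\<in>V. \<forall>y\<in>V. x + y \<in> V) \<and> (\<forall>c. \<forall>x\<in>V. zscale c x \<in> V)"

definition enum :: "nat \<Rightarrow> (nat \<Rightarrow> bit) set \<Rightarrow> nat \<Rightarrow> (nat \<Rightarrow> bit)" where
  "enum n V j = (THE v. v \<in> V \<and> card {w\<in>V. Ival n w < Ival n v} = j)"

end

theory Submission
  imports Defs
begin

text \<open>Let \<open>p\<^sub>1 < \<dots> < p\<^sub>k\<close> be the leading (highest nonzero) coordinates of the nonzero
  vectors of \<open>V\<close>. Two distinct vectors of \<open>V\<close> differ at the leading coordinate of their sum,
  which is one of the \<open>p\<^sub>i\<close>, and agree above it. Hence reading off the coordinates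
  \<open>p\<^sub>1, \<dots>, p\<^sub>k\<close> is a linear injection \<open>c : V \<rightarrow> \<int>\<^sub>2\<^sup>k\<close>, which is onto because \<open>V\<close>
  contains vectors in echelon form with leading coordinates \<open>p\<^sub>1, \<dots>, p\<^sub>k\<close>; in particular
  \<open>k = dim V\<close>. Since \<open>I\<close> compares two vectors by the coordinate at their highest difference,
  \<open>c\<close> is also order preserving, so the rank of \<open>v\<close> in \<open>V\<close> is the rank \<open>I(c v)\<close> of \<open>c v\<close> in
  \<open>\<int>\<^sub>2\<^sup>k\<close>. Thus \<open>T\<close> is the inverse of \<open>c\<close>, applied to the first \<open>k\<close> coordinates of its argument.\<close>

text \<open>Unlike the library's \<open>dim_image_eq\<close>, this does not need a finite-dimensional
  domain; the ambient space \<open>nat \<Rightarrow> bit\<close> is infinite-dimensional.\<close>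

lemma (in vector_space_pair) dim_image_eq_of_inj_on_span:
  assumes lin: "Vector_Spaces.linear s1 s2 f" and inj: "inj_on f (vs1.span S)"
  shows "vs2.dim (f ` S) = vs1.dim S"
proof -
  interpret f: Vector_Spaces.linear s1 s2 f by (fact lin)
  obtain B where B: "B \<subseteq> S" "vs1.independent B" "S \<subseteq> vs1.span B" "card B = vs1.dim S"
    using vs1.basis_exists by blast
  have span_B: "vs1.span B = vs1.span S"
    using B(1,3) vs1.span_mono vs1.span_span by blast
  show ?thesis
  proof (rule vs2.dim_unique)
    show "f ` B \<subseteq> f ` S"
      using B(1) by blast
    show "f ` S \<subseteq> vs2.span (f ` B)"
      using B(3) by (auto simp: f.span_image)
    show "vs2.independent (f ` B)"
      using f.dependent_inj_imageD[of B] inj B(2) span_B by auto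
    show "card (f ` B) = vs1.dim S"
      using B(4) inj span_B by (metis card_image inj_on_subset vs1.span_superset)
  qed
qed

lemma (in vector_space_pair) linear_if_linear_comp_inj:
  assumes f: "Vector_Spaces.linear s2 s3 f" and inj: "inj_on f S" and S: "vs2.subspace S"
    and g: "\<And>x. g x \<in> S" and fg: "Vector_Spaces.linear s1 s3 (f \<circ> g)"
  shows "Vector_Spaces.linear s1 s2 g"
proof -
  have "g (x + y) = g x + g y" for x y
  proof (rule inj_onD[OF inj])
    show "f (g (x + y)) = f (g x + g y)"
      using f fg by (simp add: linear_iff)
  qed (use g S vs2.subspace_add in auto)
  moreover have "g (c *a x) = c *b g x" for c x
  proof (rule inj_onD[OF inj])
    show "f (g (c *a x)) = f (c *b g x)"
      using f fg by (simp add: linear_iff)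
  qed (use g S vs2.subspace_scale in auto)
  ultimately show ?thesis
    by (simp add: linear_iff vs1.vector_space_axioms vs2.vector_space_axioms)
qed

lemma card_less_bij_betw:
  assumes f: "bij_betw f A B"
    and mono: "\<And>a'. a' \<in> A \<Longrightarrow> g a' < g a \<longleftrightarrow> h (f a') < h (f a)"
  shows "card {a'\<in>A. g a' < g a} = card {b\<in>B. h b < h (f a)}"
proof -
  have "f ` {a'\<in>A. g a' < g a} = {b\<in>B. h b < h (f a)}"
    using f mono by (auto simp: bij_betw_def)
  moreover have "inj_on f {a'\<in>A. g a' < g a}"
    using f by (auto simp: bij_betw_def intro: inj_on_subset)
  ultimately show ?thesis
    by (metis card_image)
qed

interpretation Z: vector_space zscale
  by unfold_locales (auto simp: zscale_def fun_eq_iff algebra_simps)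

interpretation Z_pair: vector_space_pair zscale zscale ..

lemma bit_fun_add_self [simp]: "(x :: 'a \<Rightarrow> bit) + x = 0"
  by (simp add: fun_eq_iff)

lemma bit_fun_add_eq_0_iff: "(x :: 'a \<Rightarrow> bit) + y = 0 \<longleftrightarrow> x = y"
  by (metis add.assoc add_0 bit_fun_add_self)

lemma vecsD: "x \<in> vecs m \<Longrightarrow> x i \<noteq> 0 \<Longrightarrow> 1 \<le> i \<and> i \<le> m"
  by (auto simp: vecs_def)

lemma vecs_0: "vecs 0 = {0}"
proof -
  have "x i = 0" if "x \<in> vecs 0" for x i
    using vecsD[OF that, of i] by (cases "x i") auto
  then show ?thesis by (auto simp: vecs_def fun_eq_iff)
qed

lemma vecs_mono: "j \<le> m \<Longrightarrow> vecs j \<subseteq> vecs m"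
  by (auto simp: vecs_def)

lemma vecs_SucD: "x \<in> vecs (Suc m) \<Longrightarrow> x (Suc m) = 0 \<Longrightarrow> x \<in> vecs m"
  by (auto simp: vecs_def le_Suc_eq)

lemma vecs_add: "x \<in> vecs m \<Longrightarrow> y \<in> vecs m \<Longrightarrow> x + y \<in> vecs m"
  by (auto simp: vecs_def)

lemma Ival_Suc: "Ival (Suc m) x = Ival m x + of_bit (x (Suc m)) * 2 ^ m"
  by (simp add: Ival_def)

lemma Ival_less_pow2: "Ival m x < 2 ^ m"
proof (induction m)
  case 0
  then show ?case by (simp add: Ival_def)
next
  case (Suc m)
  have "of_bit (x (Suc m)) * 2 ^ m \<le> (2::nat) ^ m"
    by (cases "x (Suc m)") auto
  with Suc show ?case by (simp add: Ival_Suc)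
qed

lemma Ival_cong: "(\<And>i. 1 \<le> i \<Longrightarrow> i \<le> m \<Longrightarrow> x i = y i) \<Longrightarrow> Ival m x = Ival m y"
  unfolding Ival_def by (rule sum.cong) auto

lemma Ival_less_if_highest_diff:
  assumes "1 \<le> h" "h \<le> m" "x h = 0" "y h = 1" "\<And>j. h < j \<Longrightarrow> j \<le> m \<Longrightarrow> x j = y j"
  shows "Ival m x < Ival m y"
  using assms
proof (induction m)
  case 0
  then show ?case by simp
next
  case (Suc m)
  show ?case
  proof (cases "h = Suc m")
    case True
    then show ?thesis using Suc.prems Ival_less_pow2[of m x] by (simp add: Ival_Suc)
  next
    case False
    then have "Ival m x < Ival m y" and "x (Suc m) = y (Suc m)"
      using Suc by auto
    then show ?thesis by (simp add: Ival_Suc)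
  qed
qed

lemma Ival_less_iff_highest_diff:
  assumes "1 \<le> h" "h \<le> m" "x h \<noteq> y h" "\<And>j. h < j \<Longrightarrow> x j = y j"
  shows "Ival m x < Ival m y \<longleftrightarrow> y h = 1"
proof (cases "y h")
  case zero
  then have "Ival m y < Ival m x"
    using assms by (intro Ival_less_if_highest_diff[of h]) auto
  with zero show ?thesis by simp
next
  case one
  then show ?thesis
    using assms by (auto intro: Ival_less_if_highest_diff[of h])
qed

definition lead :: "(nat \<Rightarrow> bit) \<Rightarrow> nat" where
  "lead v = Max {i. v i \<noteq> 0}"

lemma lead_vecs:
  assumes "v \<in> vecs m" "v \<noteq> 0"
  shows "v (lead v) = 1" "1 \<le> lead v" "lead v \<le> m" "\<And>j. lead v < j \<Longrightarrow> v j = 0"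
proof -
  have sub: "{i. v i \<noteq> 0} \<subseteq> {1..m}"
    using vecsD[OF assms(1)] by auto
  then have fin: "finite {i. v i \<noteq> 0}"
    by (rule finite_subset) auto
  have "{i. v i \<noteq> 0} \<noteq> {}"
    using assms(2) by (auto simp: fun_eq_iff)
  then have "lead v \<in> {i. v i \<noteq> 0}"
    unfolding lead_def using fin by (rule Max_in[rotated])
  then show "v (lead v) = 1" "1 \<le> lead v" "lead v \<le> m"
    using sub by auto
  show "v j = 0" if "lead v < j" for j
    using Max_ge[OF fin, of j] that by (force simp: lead_def)
qed

lemma lead_add:
  assumes "x \<in> vecs m" "y \<in> vecs m" "x \<noteq> y"
  shows "1 \<le> lead (x + y)" "lead (x + y) \<le> m" "x (lead (x + y)) \<noteq> y (lead (x + y))"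
    "\<And>j. lead (x + y) < j \<Longrightarrow> x j = y j"
proof -
  have "x + y \<in> vecs m" "x + y \<noteq> 0"
    using assms by (auto simp: vecs_add bit_fun_add_eq_0_iff)
  note lead_xy = lead_vecs[OF this]
  show "1 \<le> lead (x + y)" "lead (x + y) \<le> m"
    using lead_xy by auto
  show "x (lead (x + y)) \<noteq> y (lead (x + y))"
    using lead_xy(1) by auto
  show "x j = y j" if "lead (x + y) < j" for j
    using lead_xy(4)[OF that] by (cases "x j"; cases "y j") auto
qed

lemma inj_on_Ival: "inj_on (Ival m) (vecs m)"
proof (rule inj_onI, rule ccontr)
  fix x y
  assume x: "x \<in> vecs m" and y: "y \<in> vecs m" and eq: "Ival m x = Ival m y" and "x \<noteq> y"
  let ?h = "lead (x + y)"
  have diff: "x ?h \<noteq> y ?h"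
    using lead_add[OF x y \<open>x \<noteq> y\<close>] by blast
  have "Ival m x < Ival m y \<longleftrightarrow> y ?h = 1"
    using lead_add[OF x y \<open>x \<noteq> y\<close>] by (intro Ival_less_iff_highest_diff) auto
  moreover have "Ival m y < Ival m x \<longleftrightarrow> x ?h = 1"
    using lead_add[OF x y \<open>x \<noteq> y\<close>] by (intro Ival_less_iff_highest_diff) auto
  ultimately show False
    using diff eq
    by (cases "x ?h"; cases "y ?h") auto
qed

lemma Ival_surj: "c < 2 ^ m \<Longrightarrow> \<exists>x\<in>vecs m. Ival m x = c"
proof (induction m arbitrary: c)
  case 0
  then show ?case by (auto simp: vecs_0 Ival_def)
next
  case (Suc m)
  show ?case
  proof (cases "c < 2 ^ m")
    case True
    then obtain x where x: "x \<in> vecs m" "Ival m x = c"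
      using Suc.IH by blast
    have "x (Suc m) = 0"
      using vecsD[OF x(1), of "Suc m"] by (cases "x (Suc m)") auto
    then have "Ival (Suc m) x = c"
      using x by (simp add: Ival_Suc)
    then show ?thesis
      using x vecs_mono[of m "Suc m"] by auto
  next
    case False
    then have "c - 2 ^ m < 2 ^ m"
      using Suc.prems by simp
    then obtain x where x: "x \<in> vecs m" "Ival m x = c - 2 ^ m"
      using Suc.IH by blast
    define x' where "x' = x(Suc m := 1)"
    have "Ival m x' = Ival m x"
      by (rule Ival_cong) (auto simp: x'_def)
    moreover have "x' \<in> vecs (Suc m)"
      using x(1) by (auto simp: vecs_def x'_def)
    ultimately show ?thesis
      using x False by (auto simp: Ival_Suc x'_def intro!: bexI[of _ x'])
  qed
qed

lemma bij_betw_Ival: "bij_betw (Ival m) (vecs m) {..<2 ^ m}"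
  unfolding bij_betw_def
  using inj_on_Ival Ival_less_pow2 Ival_surj by fastforce

lemma card_vecs_less_Ival:
  assumes "x \<in> vecs m"
  shows "card {y\<in>vecs m. Ival m y < Ival m x} = Ival m x"
proof -
  have "{c\<in>{..<2 ^ m}. c < Ival m x} = {..<Ival m x}"
    using Ival_less_pow2[of m x] by auto
  then show ?thesis
    using card_less_bij_betw[OF bij_betw_Ival, where g = "Ival m" and a = x and h = id] by simp
qed

lemma vecs_subset_if_echelon:
  assumes zero: "0 \<in> W" and add: "\<And>x y. x \<in> W \<Longrightarrow> y \<in> W \<Longrightarrow> x + y \<in> W"
    and echelon: "\<And>d. d < m \<Longrightarrow> \<exists>w\<in>W. w \<in> vecs (Suc d) \<and> w (Suc d) = 1"
  shows "vecs m \<subseteq> W"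
  using echelon
proof (induction m)
  case 0
  then show ?case using zero by (simp add: vecs_0)
next
  case (Suc m)
  then have IH: "vecs m \<subseteq> W"
    by simp
  show ?case
  proof
    fix x assume x: "x \<in> vecs (Suc m)"
    show "x \<in> W"
    proof (cases "x (Suc m)")
      case zero
      then show ?thesis
        using IH vecs_SucD[OF x] by blast
    next
      case one
      obtain w where w: "w \<in> W" "w \<in> vecs (Suc m)" "w (Suc m) = 1"
        using Suc.prems by blast
      have "x + w \<in> vecs m"
        using vecs_SucD[OF vecs_add[OF x w(2)]] one w(3) by simp
      then have "x + w + w \<in> W"
        using IH w(1) add by blast
      then show ?thesis
        by (simp add: add.assoc)
    qed
  qed
qed

definition unit_vec :: "nat \<Rightarrow> nat \<Rightarrow> bit" where
  "unit_vec i = (\<lambda>j. if j = i then 1 else 0)"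

lemma sum_fun_apply: "sum f A j = (\<Sum>i\<in>A. f i j)"
  by (induction A rule: infinite_finite_induct) auto

lemma dim_vecs: "Z.dim (vecs m) = m"
proof (rule Z.dim_unique[of "unit_vec ` {1..m}"])
  show "unit_vec ` {1..m} \<subseteq> vecs m"
    by (auto simp: unit_vec_def vecs_def split: if_splits)
  show "vecs m \<subseteq> Z.span (unit_vec ` {1..m})"
  proof
    fix x assume x: "x \<in> vecs m"
    have "x = (\<Sum>i\<in>{1..m}. zscale (x i) (unit_vec i))"
    proof
      fix j
      have "(\<Sum>i\<in>{1..m}. zscale (x i) (unit_vec i)) j = (if j \<in> {1..m} then x j else 0)"
        by (simp add: sum_fun_apply zscale_def unit_vec_def if_distrib sum.If_cases
            del: mult_bit_eq_and)
      also have "\<dots> = x j"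
        using vecsD[OF x, of j] by (cases "x j") auto
      finally show "x j = (\<Sum>i\<in>{1..m}. zscale (x i) (unit_vec i)) j" by simp
    qed
    also have "\<dots> \<in> Z.span (unit_vec ` {1..m})"
      by (intro Z.span_sum Z.span_scale Z.span_base) auto
    finally show "x \<in> Z.span (unit_vec ` {1..m})" .
  qed
  have "inj unit_vec"
    by (auto simp: inj_def unit_vec_def fun_eq_iff split: if_splits)
  then show "card (unit_vec ` {1..m}) = m"
    by (simp add: card_image inj_on_subset)
  show "Z.independent (unit_vec ` {1..m})"
    unfolding Z.dependent_def
  proof clarify
    fix i assume "i \<in> {1..m}" and i: "unit_vec i \<in> Z.span (unit_vec ` {1..m} - {unit_vec i})"
    have "Z.span (unit_vec ` {1..m} - {unit_vec i}) \<subseteq> {x. x i = 0}"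
      by (rule Z.span_minimal) (auto simp: unit_vec_def Z.subspace_def zscale_def)
    with i show False
      by (auto simp: unit_vec_def)
  qed
qed

definition truncate :: "nat \<Rightarrow> (nat \<Rightarrow> bit) \<Rightarrow> nat \<Rightarrow> bit" where
  "truncate m x = (\<lambda>i. if 1 \<le> i \<and> i \<le> m then x i else 0)"

lemma truncate_vecs: "truncate m x \<in> vecs m"
  by (simp add: truncate_def vecs_def)

lemma truncate_id: "x \<in> vecs m \<Longrightarrow> truncate m x = x"
  using vecsD[of x m] by (fastforce simp: truncate_def fun_eq_iff)

lemma Ival_truncate: "Ival m (truncate m x) = Ival m x"
  by (rule Ival_cong) (simp add: truncate_def)

lemma linear_truncate: "Vector_Spaces.linear zscale zscale (truncate m)"
  by (auto simp: linear_iff truncate_def zscale_def fun_eq_iff Z.vector_space_axioms)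

definition pivots :: "(nat \<Rightarrow> bit) set \<Rightarrow> nat list" where
  "pivots V = sorted_list_of_set (lead ` (V - {0}))"

definition compress :: "(nat \<Rightarrow> bit) set \<Rightarrow> (nat \<Rightarrow> bit) \<Rightarrow> nat \<Rightarrow> bit" where
  "compress V v = truncate (length (pivots V)) (\<lambda>i. v (pivots V ! (i - 1)))"

lemma compress_Suc: "i < length (pivots V) \<Longrightarrow> compress V v (Suc i) = v (pivots V ! i)"
  by (simp add: compress_def truncate_def)

lemma compress_vecs: "compress V v \<in> vecs (length (pivots V))"
  by (simp add: compress_def truncate_vecs)

lemma linear_compress: "Vector_Spaces.linear zscale zscale (compress V)"
  by (auto simp: linear_iff compress_def truncate_def zscale_def fun_eq_iff Z.vector_space_axioms)

context
  fixes n :: nat and V :: "(nat \<Rightarrow> bit) set"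
  assumes V: "is_subspace n V"
begin

lemma subspace_V: "Z.subspace V"
  using V by (simp add: is_subspace_def Z.subspace_def)

lemma V_subset_vecs: "V \<subseteq> vecs n"
  using V by (simp add: is_subspace_def)

lemma set_pivots: "set (pivots V) = lead ` (V - {0})"
proof -
  have "lead ` (V - {0}) \<subseteq> {1..n}"
    using lead_vecs V_subset_vecs by fastforce
  then show ?thesis
    unfolding pivots_def by (simp add: finite_subset)
qed

lemma sorted_pivots: "sorted_wrt (<) (pivots V)"
  by (simp add: pivots_def)

lemma pivots_less_iff:
  "i < length (pivots V) \<Longrightarrow> j < length (pivots V) \<Longrightarrow> pivots V ! i < pivots V ! j \<longleftrightarrow> i < j"
  using sorted_wrt_nth_less[OF sorted_pivots, of i j] sorted_wrt_nth_less[OF sorted_pivots, of j i]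
  by (cases i j rule: linorder_cases) auto

lemma pivot_in_range:
  assumes "i < length (pivots V)"
  shows "1 \<le> pivots V ! i \<and> pivots V ! i \<le> n"
proof -
  obtain v where "v \<in> V" "v \<noteq> 0" "pivots V ! i = lead v"
    using nth_mem[OF assms] set_pivots by auto
  then show ?thesis
    using lead_vecs[of v n] V_subset_vecs by auto
qed

lemma pivot_highest_diff:
  assumes "u \<in> V" "w \<in> V" "u \<noteq> w"
  obtains i where "i < length (pivots V)" "u (pivots V ! i) \<noteq> w (pivots V ! i)"
    "\<And>j. pivots V ! i < j \<Longrightarrow> u j = w j"
proof -
  have "u + w \<in> V - {0}"
    using assms Z.subspace_add[OF subspace_V] by (auto simp: bit_fun_add_eq_0_iff)
  then obtain i where "i < length (pivots V)" "pivots V ! i = lead (u + w)"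
    by (metis imageI in_set_conv_nth set_pivots)
  moreover have "u \<in> vecs n" "w \<in> vecs n"
    using assms(1,2) V_subset_vecs by auto
  ultimately show ?thesis
    using lead_add[of u n w] assms(3) by (intro that[of i]) auto
qed

lemma inj_on_compress: "inj_on (compress V) V"
proof (rule inj_onI, rule ccontr)
  fix u w assume u: "u \<in> V" and w: "w \<in> V" and eq: "compress V u = compress V w" and "u \<noteq> w"
  then obtain i where "i < length (pivots V)" "u (pivots V ! i) \<noteq> w (pivots V ! i)"
    using pivot_highest_diff[OF u w] by blast
  then show False
    using eq by (metis compress_Suc)
qed

lemma Ival_compress_less_iff:
  assumes u: "u \<in> V" and w: "w \<in> V"
  shows "Ival (length (pivots V)) (compress V u) < Ival (length (pivots V)) (compress V w)
    \<longleftrightarrow> Ival n u < Ival n w"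
proof (cases "u = w")
  case False
  let ?k = "length (pivots V)" and ?p = "(!) (pivots V)"
  obtain i where i: "i < ?k" "u (?p i) \<noteq> w (?p i)" "\<And>j. ?p i < j \<Longrightarrow> u j = w j"
    using pivot_highest_diff[OF u w False] by blast
  have "Ival n u < Ival n w \<longleftrightarrow> w (?p i) = 1"
    using i pivot_in_range by (intro Ival_less_iff_highest_diff) auto
  moreover have "compress V u j = compress V w j" if "Suc i < j" for j
  proof (cases "j \<le> ?k")
    case True
    then have "?p i < ?p (j - 1)"
      using pivots_less_iff that i(1) by auto
    then show ?thesis
      using i(3) that by (simp add: compress_def truncate_def)
  qed (simp add: compress_def truncate_def)
  then have "Ival ?k (compress V u) < Ival ?k (compress V w) \<longleftrightarrow> compress V w (Suc i) = 1"
    using i by (intro Ival_less_iff_highest_diff) (auto simp: compress_Suc)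
  ultimately show ?thesis
    using i(1) by (simp add: compress_Suc)
qed simp

lemma compress_image: "compress V ` V = vecs (length (pivots V))"
proof
  show "compress V ` V \<subseteq> vecs (length (pivots V))"
    using compress_vecs by blast
  have image: "Z.subspace (compress V ` V)"
    by (rule Z_pair.linear_subspace_image[OF linear_compress subspace_V])
  show "vecs (length (pivots V)) \<subseteq> compress V ` V"
  proof (rule vecs_subset_if_echelon[OF Z.subspace_0[OF image] Z.subspace_add[OF image]])
    fix d assume d: "d < length (pivots V)"
    then obtain v where v: "v \<in> V" "v \<noteq> 0" "pivots V ! d = lead v"
      using nth_mem[OF d] set_pivots by auto
    note lead_v = lead_vecs[OF subsetD[OF V_subset_vecs v(1)] v(2)]
    have "compress V v \<in> vecs (Suc d)"
      unfolding vecs_def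
    proof (intro CollectI allI impI)
      fix j assume j: "compress V v j \<noteq> 0"
      have j_range: "1 \<le> j" "j \<le> length (pivots V)"
        using vecsD[OF compress_vecs j] by auto
      have "j \<le> Suc d"
      proof (rule ccontr)
        assume "\<not> j \<le> Suc d"
        then have "lead v < pivots V ! (j - 1)"
          using pivots_less_iff[of d "j - 1"] d j_range v(3) by auto
        then show False
          using lead_v(4) j j_range by (simp add: compress_def truncate_def)
      qed
      with j_range show "1 \<le> j \<and> j \<le> Suc d"
        by simp
    qed
    moreover have "compress V v (Suc d) = 1"
      using d v(3) lead_v(1) by (simp add: compress_Suc)
    ultimately show "\<exists>w\<in>compress V ` V. w \<in> vecs (Suc d) \<and> w (Suc d) = 1"
      using v(1) by blast
  qed
qed

lemma bij_betw_compress: "bij_betw (compress V) V (vecs (length (pivots V)))"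
  using inj_on_compress compress_image by (simp add: bij_betw_def)

lemma dim_eq_length_pivots: "Z.dim V = length (pivots V)"
proof -
  have "Z.dim (compress V ` V) = Z.dim V"
    using Z_pair.dim_image_eq_of_inj_on_span[OF linear_compress, of V V] inj_on_compress
      Z.span_eq_iff[THEN iffD2, OF subspace_V] by simp
  then show ?thesis
    by (simp add: compress_image dim_vecs)
qed

lemma card_less_eq_Ival_compress:
  assumes "v \<in> V"
  shows "card {w\<in>V. Ival n w < Ival n v} = Ival (length (pivots V)) (compress V v)"
  using card_less_bij_betw[OF bij_betw_compress, where g = "Ival n" and a = v
      and h = "Ival (length (pivots V))"]
    Ival_compress_less_iff[OF _ assms] card_vecs_less_Ival[OF compress_vecs]
  by simp

lemma enum_Ival_compress:
  assumes "v \<in> V"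
  shows "enum n V (Ival (length (pivots V)) (compress V v)) = v"
  unfolding enum_def
proof (rule the_equality)
  fix v' assume v': "v' \<in> V \<and> card {w\<in>V. Ival n w < Ival n v'} = Ival (length (pivots V)) (compress V v)"
  then have "Ival (length (pivots V)) (compress V v') = Ival (length (pivots V)) (compress V v)"
    using card_less_eq_Ival_compress[of v'] by simp
  then have "compress V v' = compress V v"
    using inj_on_Ival compress_vecs by (blast dest: inj_onD)
  then show "v' = v"
    using inj_on_compress assms v' by (blast dest: inj_onD)
qed (use assms card_less_eq_Ival_compress in simp)

lemma enum_Ival:
  shows "enum n V (Ival (length (pivots V)) x) \<in> V"
    and "compress V (enum n V (Ival (length (pivots V)) x)) = truncate (length (pivots V)) x"
proof -
  obtain v where v: "v \<in> V" "compress V v = truncate (length (pivots V)) x"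
    using compress_image truncate_vecs by (metis imageE)
  then have "enum n V (Ival (length (pivots V)) x) = v"
    using enum_Ival_compress[OF v(1)] by (simp add: Ival_truncate)
  with v show "enum n V (Ival (length (pivots V)) x) \<in> V"
    and "compress V (enum n V (Ival (length (pivots V)) x)) = truncate (length (pivots V)) x"
    by simp_all
qed

end

theorem lemma1:
  fixes n k :: nat and V :: "(nat \<Rightarrow> bit) set"
  assumes "is_subspace n V"
    and "vector_space.dim zscale V = k"
  defines "T \<equiv> (\<lambda>x. enum n V (Ival k x))"
  shows "Vector_Spaces.linear zscale zscale T \<and> bij_betw T (vecs k) V"
proof -
  have k: "k = length (pivots V)"
    using assms(2) dim_eq_length_pivots[OF assms(1)] by simp
  have T_V: "T x \<in> V" and compress_T: "compress V (T x) = truncate k x" for x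
    using enum_Ival[OF assms(1)] by (simp_all add: T_def k)
  have T_compress: "T (compress V v) = v" if "v \<in> V" for v
    using enum_Ival_compress[OF assms(1) that] by (simp add: T_def k)
  have "Vector_Spaces.linear zscale zscale T"
  proof (rule Z_pair.linear_if_linear_comp_inj[OF linear_compress inj_on_compress subspace_V])
    show "Vector_Spaces.linear zscale zscale (compress V \<circ> T)"
      using linear_truncate by (simp add: comp_def compress_T)
  qed (use assms(1) T_V in auto)
  moreover have "bij_betw T (vecs k) V"
    by (rule bij_betw_byWitness[where f' = "compress V"])
      (use T_V compress_T T_compress truncate_id compress_vecs k in auto)
  ultimately show ?thesis ..
qed

end
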